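(* For $n\ge0$ let $\alpha_n$ be the finite knock sequence $1^{2^n},2^{2^n},\dots,d^{2^n}$ (knock $2^n$ consecutive times on door $1$, then $2^n$ times on door $2$, ..., then $2^n$ times on door $d$). If all doors of a configuration $\mathcal{C}$ of $d$ doors have the same fundamental distribution, then $$\mathbb{T}_{\mathcal{C}}(\alpha_0\cdot\alpha_1\cdot\alpha_2\cdots)=\Theta(\mathbb{T}_{\mathcal{C}}),$$ with universal constants.
   Context: Dependent doors model. Fix an integer $d\ge 2$ and doors $1,\dots,d$, all initially closed; once a door opens it stays open forever. A configuration $\mathcal{C}$ specifies for each door $i$ a function $\phi_i^{\mathcal{C}}$ mapping every finite nonempty sequence $(X_1,\dots,X_n)$ of subsets of $\{1,\dots,i-1\}$ to $[0,1]$: $\phi_i^{\mathcal{C}}(X_1,\dots,X_n)$ is the probability that door $i$ has opened during $n$ knocks on it, where $X_j$ is the set of open doors among $\{1,\dots,i-1\}$ at the time of the $j$-th knock on door $i$ (so a closed door $i$ opens at its $n$-th knock with conditional probability $(\phi_i(X_1..X_n)-\phi_i(X_1..X_{n-1}))/(1-\phi_i(X_1..X_{n-1}))$, with $\phi_i$ of the empty sequence equal to $0$). Configurations are assumed monotone ($\phi_i(X')\le\phi_i(X)$ whenever $X'$ is a, not necessarily consecutive, subsequence of $X$) and positively correlated ($\phi_i(X'_1,\dots,X'_n)\le\phi_i(X_1,\dots,X_n)$ whenever $X'_j\subseteq X_j$ for all $j$). The fundamental distribution of door $i$ is $p_i(n)=1-\phi_i(\{1,\dots,i-1\}^n)$ ($p_i(0)=1$),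 and $E_i=\sum_{n\ge0}p_i(n)$ is assumed finite. A knock sequence $\pi$ is an infinite sequence of door indices, executed in order without any feedback; $\mathbb{T}_{\mathcal{C}}(\pi)$ is the expected number of knocks until all $d$ doors are open, and $\mathbb{T}_{\mathcal{C}}=\inf_\pi \mathbb{T}_{\mathcal{C}}(\pi)$. *)

theory Defs
  imports "HOL-Probability.Probability" "HOL-Library.Sublist"
begin

text \<open>Doors are the naturals 1..d. A configuration is
  given by phi :: nat => nat set list => real, where phi i Xs is the probability
  that door i has opened during the knocks on it, Xs listing the sets of open
  doors among 1..i-1 at the successive knocks on door i.\<close>

definition phi0 :: "(nat \<Rightarrow> nat set list \<Rightarrow> real) \<Rightarrow> nat \<Rightarrow> nat set list \<Rightarrow> real" where
  "phi0 \<phi> i Xs = (if Xs = [] then 0 else \<phi> i Xs)"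

definition adm_seq :: "nat \<Rightarrow> nat set list \<Rightarrow> bool" where
  "adm_seq i Xs \<longleftrightarrow> Xs \<noteq> [] \<and> (\<forall>X\<in>set Xs. X \<subseteq> {1..<i})"

text \<open>A monotone, positively correlated configuration of d doors.\<close>
definition configuration :: "nat \<Rightarrow> (nat \<Rightarrow> nat set list \<Rightarrow> real) \<Rightarrow> bool" where
  "configuration d \<phi> \<longleftrightarrow>
     (\<forall>i\<in>{1..d}.
        (\<forall>Xs. adm_seq i Xs \<longrightarrow> 0 \<le> \<phi> i Xs \<and> \<phi> i Xs \<le> 1) \<and>
        (\<forall>Xs Ys. adm_seq i Xs \<longrightarrow> adm_seq i Ys \<longrightarrow> subseq Ys Xs \<longrightarrow> \<phi> i Ys \<le> \<phi> i Xs) \<and>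
        (\<forall>Xs Ys. adm_seq i Xs \<longrightarrow> adm_seq i Ys \<longrightarrow> list_all2 (\<subseteq>) Ys Xs \<longrightarrow> \<phi> i Ys \<le> \<phi> i Xs))"

definition fund :: "(nat \<Rightarrow> nat set list \<Rightarrow> real) \<Rightarrow> nat \<Rightarrow> nat \<Rightarrow> real" where
  "fund \<phi> i n = 1 - phi0 \<phi> i (replicate n {1..<i})"

text \<open>Distribution of the history [O_0, ..., O_t] of open-door sets after t knocks
  of the knock sequence pi (O_s = set of open doors just before knock s, knocks indexed from 0).\<close>
primrec hist :: "(nat \<Rightarrow> nat set list \<Rightarrow> real) \<Rightarrow> (nat \<Rightarrow> nat) \<Rightarrow> nat \<Rightarrow> nat set list pmf" where
  "hist \<phi> \<pi> 0 = return_pmf [{}]"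
| "hist \<phi> \<pi> (Suc t) = bind_pmf (hist \<phi> \<pi> t) (\<lambda>h.
     let Op = last h; i = \<pi> t in
     if i \<in> Op then return_pmf (h @ [Op])
     else
       let Xs = [h ! s \<inter> {1..<i}. s \<leftarrow> [0..<Suc t], \<pi> s = i];
           prev = butlast Xs;
           q = (\<phi> i Xs - phi0 \<phi> i prev) / (1 - phi0 \<phi> i prev)
       in map_pmf (\<lambda>b. h @ [if b then insert i Op else Op]) (bernoulli_pmf q))"

text \<open>Expected number of knocks until all d doors are open: sum over t of
  P(not all doors open after t knocks).\<close>
definition Tseq :: "nat \<Rightarrow> (nat \<Rightarrow> nat set list \<Rightarrow> real) \<Rightarrow> (nat \<Rightarrow> nat) \<Rightarrow> ennreal" where
  "Tseq d \<phi> \<pi> = (\<Sum>t. ennreal (measure_pmf.prob (hist \<phi> \<pi> t) {h. \<not> {1..d} \<subseteq> last h}))"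

definition knock_seqs :: "nat \<Rightarrow> (nat \<Rightarrow> nat) set" where
  "knock_seqs d = {\<pi>. \<forall>t. \<pi> t \<in> {1..d}}"

definition Topt :: "nat \<Rightarrow> (nat \<Rightarrow> nat set list \<Rightarrow> real) \<Rightarrow> ennreal" where
  "Topt d \<phi> = (INF \<pi> \<in> knock_seqs d. Tseq d \<phi> \<pi>)"

definition alpha_block :: "nat \<Rightarrow> nat \<Rightarrow> nat list" where
  "alpha_block d n = concat (map (\<lambda>i. replicate (2^n) i) [1..<Suc d])"

function alpha_from :: "nat \<Rightarrow> nat \<Rightarrow> nat \<Rightarrow> nat" where
  "alpha_from d n t =
     (if d = 0 then 1
      else if t < length (alpha_block d n) then alpha_block d n ! t
      else alpha_from d (Suc n) (t - length (alpha_block d n)))"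
  by pat_completeness auto
termination
proof (relation "Wellfounded.measure (\<lambda>(d, n, t). t)")
  fix d n t
  assume "d \<noteq> 0" "\<not> t < length (alpha_block d n)"
  moreover have "length (alpha_block d n) = d * 2^n"
    by (simp add: alpha_block_def length_concat comp_def sum_list_triv)
  ultimately show "((d, Suc n, t - length (alpha_block d n)), d, n, t) \<in> Wellfounded.measure (\<lambda>(d, n, t). t)"
  proof -
    have p: "0 < d * 2^n" using \<open>d \<noteq> 0\<close> by simp
    then have "0 < t" using \<open>\<not> t < length (alpha_block d n)\<close> \<open>length (alpha_block d n) = d * 2^n\<close> by linarith
    then show ?thesis using p \<open>length (alpha_block d n) = d * 2^n\<close> by simp
  qed
qed auto

definition alpha :: "nat \<Rightarrow> nat \<Rightarrow> nat" where
  "alpha d = alpha_from d 0"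

end

theory Submission
  imports Defs
begin

(* Lower bound: by positive correlation, after t knocks all doors are open with probability at most
   the product over j of 1 - p(c j), where c j counts the knocks on door j so far; the corresponding
   product of conditional opening probabilities is a supermartingale. If 2 t \<le> d n, at least half of the
   doors have c j \<le> n, so some door is still closed with probability at least min 1 (d p(n)) / 4.
   Summing over the phases of length d 2^k yields a lower bound L \<le> T(pi) for every knock sequence,
   and trivially d \<le> T(pi).

   Upper bound: in phase k of alpha, door i receives a run of 2^k consecutive knocks, after which only
   doors above i are knocked in that phase. If some door is closed at the end of the phase, the
   smallest closed door i stayed closed during its run although all doors below it were open, which by
   monotonicity has probability at most p(2^k). Hence after phase k + 2 some door is closed with
   probability at most min 1 (d p(2^(k+2))), and T(alpha) \<le> 32 L + 7 d \<le> 39 T. *)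

section \<open>Histories of the knock process\<close>

definition hist_step :: "(nat \<Rightarrow> nat set list \<Rightarrow> real) \<Rightarrow> (nat \<Rightarrow> nat) \<Rightarrow> nat \<Rightarrow> nat set list \<Rightarrow> nat set list pmf" where
  "hist_step \<phi> \<pi> t h = (let Op = last h; i = \<pi> t in
     if i \<in> Op then return_pmf (h @ [Op])
     else
       let Xs = [h ! s \<inter> {1..<i}. s \<leftarrow> [0..<Suc t], \<pi> s = i];
           prev = butlast Xs;
           q = (\<phi> i Xs - phi0 \<phi> i prev) / (1 - phi0 \<phi> i prev)
       in map_pmf (\<lambda>b. h @ [if b then insert i Op else Op]) (bernoulli_pmf q))"

lemma hist_Suc_step: "hist \<phi> \<pi> (Suc t) = bind_pmf (hist \<phi> \<pi> t) (hist_step \<phi> \<pi> t)"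
  by (simp add: hist_step_def[abs_def])

definition knock_args :: "(nat \<Rightarrow> nat) \<Rightarrow> nat \<Rightarrow> nat set list \<Rightarrow> nat \<Rightarrow> nat set list" where
  "knock_args \<pi> i h t = [h ! s \<inter> {1..<i}. s \<leftarrow> [0..<t], \<pi> s = i]"

definition knock_count :: "(nat \<Rightarrow> nat) \<Rightarrow> nat \<Rightarrow> nat \<Rightarrow> nat" where
  "knock_count \<pi> i t = length (filter (\<lambda>s. \<pi> s = i) [0..<t])"

definition open_prob :: "(nat \<Rightarrow> nat set list \<Rightarrow> real) \<Rightarrow> (nat \<Rightarrow> nat) \<Rightarrow> nat \<Rightarrow> nat set list \<Rightarrow> real" where
  "open_prob \<phi> \<pi> t h =
     (\<phi> (\<pi> t) (knock_args \<pi> (\<pi> t) h t @ [h ! t \<inter> {1..<\<pi> t}]) - phi0 \<phi> (\<pi> t) (knock_args \<pi> (\<pi> t) h t))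
     / (1 - phi0 \<phi> (\<pi> t) (knock_args \<pi> (\<pi> t) h t))"

lemma knock_args_0 [simp]: "knock_args \<pi> i h 0 = []"
  by (simp add: knock_args_def)

lemma knock_args_Suc:
  "knock_args \<pi> i h (Suc t) = knock_args \<pi> i h t @ (if \<pi> t = i then [h ! t \<inter> {1..<i}] else [])"
  by (simp add: knock_args_def)

lemma knock_args_append: "t \<le> length h \<Longrightarrow> knock_args \<pi> i (h @ xs) t = knock_args \<pi> i h t"
  by (induction t) (auto simp: knock_args_Suc nth_append)

lemma last_eq_nth_length: "length h = Suc t \<Longrightarrow> last h = h ! t"
  by (cases h rule: rev_cases) auto

lemma knock_args_snoc:
  "length h = Suc t \<Longrightarrow>
   knock_args \<pi> i (h @ [x]) (Suc t) = knock_args \<pi> i h t @ (if \<pi> t = i then [last h \<inter> {1..<i}] else [])"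
  by (simp add: knock_args_append knock_args_Suc last_eq_nth_length nth_append)

lemma length_knock_args: "length (knock_args \<pi> i h t) = knock_count \<pi> i t"
  by (induction t) (auto simp: knock_args_Suc knock_count_def)

lemma knock_count_Suc: "knock_count \<pi> i (Suc t) = knock_count \<pi> i t + (if \<pi> t = i then 1 else 0)"
  by (simp add: knock_count_def)

lemma knock_count_mono: "t \<le> T \<Longrightarrow> knock_count \<pi> i t \<le> knock_count \<pi> i T"
proof -
  assume "t \<le> T"
  then have "[0..<T] = [0..<t] @ [t..<T]" by (metis le0 upt_add_eq_append le_add_diff_inverse)
  then show ?thesis unfolding knock_count_def by simp
qed

lemma sum_knock_count: "(\<And>s. \<pi> s \<in> {1..d}) \<Longrightarrow> (\<Sum>i\<in>{1..d}. knock_count \<pi> i t) = t"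
proof (induction t)
  case 0
  then show ?case by (simp add: knock_count_def)
next
  case (Suc t)
  have "(\<Sum>i\<in>{1..d}. knock_count \<pi> i (Suc t))
      = (\<Sum>i\<in>{1..d}. knock_count \<pi> i t) + (\<Sum>i\<in>{1..d}. if \<pi> t = i then 1 else 0)"
    by (simp add: knock_count_Suc sum.distrib)
  also have "(\<Sum>i\<in>{1..d}. if \<pi> t = i then 1 else 0) = (1::nat)" using Suc.prems by simp
  finally show ?case using Suc by simp
qed

lemma hist_step_open: "\<pi> t \<in> last h \<Longrightarrow> hist_step \<phi> \<pi> t h = return_pmf (h @ [last h])"
  by (simp add: hist_step_def)

lemma hist_step_closed:
  assumes "\<pi> t \<notin> last h" "length h = Suc t"
  shows "hist_step \<phi> \<pi> t h =
    map_pmf (\<lambda>b. h @ [if b then insert (\<pi> t) (last h) else last h]) (bernoulli_pmf (open_prob \<phi> \<pi> t h))"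
proof -
  have "[h ! s \<inter> {1..<\<pi> t}. s \<leftarrow> [0..<Suc t], \<pi> s = \<pi> t]
      = knock_args \<pi> (\<pi> t) h t @ [h ! t \<inter> {1..<\<pi> t}]"
    using knock_args_Suc[of \<pi> "\<pi> t" h t] by (simp add: knock_args_def)
  then show ?thesis using assms unfolding hist_step_def Let_def open_prob_def by simp
qed

lemma set_pmf_hist_step:
  "h' \<in> set_pmf (hist_step \<phi> \<pi> t h) \<Longrightarrow> \<exists>x. h' = h @ [x] \<and> last h \<subseteq> x \<and> x \<subseteq> insert (\<pi> t) (last h)"
  by (auto simp: hist_step_def Let_def split: if_splits)

definition hist_wf :: "(nat \<Rightarrow> nat) \<Rightarrow> nat \<Rightarrow> nat set list \<Rightarrow> bool" where
  "hist_wf \<pi> t h \<longleftrightarrow> length h = Suc t \<and> h ! 0 = {} \<and>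
     (\<forall>s<t. h ! s \<subseteq> h ! Suc s \<and> h ! Suc s \<subseteq> insert (\<pi> s) (h ! s))"

lemma hist_wf_hist: "h \<in> set_pmf (hist \<phi> \<pi> t) \<Longrightarrow> hist_wf \<pi> t h"
proof (induction t arbitrary: h)
  case 0
  then show ?case by (simp add: hist_wf_def)
next
  case (Suc t)
  from Suc.prems obtain g where g: "g \<in> set_pmf (hist \<phi> \<pi> t)" "h \<in> set_pmf (hist_step \<phi> \<pi> t g)"
    unfolding hist_Suc_step by auto
  have wf: "hist_wf \<pi> t g" using Suc.IH[OF g(1)] .
  from set_pmf_hist_step[OF g(2)] obtain x
    where x: "h = g @ [x]" "last g \<subseteq> x" "x \<subseteq> insert (\<pi> t) (last g)" by blast
  have lg: "length g = Suc t" using wf by (simp add: hist_wf_def)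
  have "h ! s \<subseteq> h ! Suc s \<and> h ! Suc s \<subseteq> insert (\<pi> s) (h ! s)" if "s < Suc t" for s
  proof (cases "s < t")
    case True
    then show ?thesis using wf x lg by (simp add: hist_wf_def nth_append)
  next
    case False
    then have "s = t" using that by simp
    then show ?thesis using x lg last_eq_nth_length[OF lg] by (simp add: nth_append)
  qed
  then show ?case using x lg wf unfolding hist_wf_def by (simp add: nth_append)
qed

lemma length_hist: "h \<in> set_pmf (hist \<phi> \<pi> t) \<Longrightarrow> length h = Suc t"
  using hist_wf_hist[of h \<phi> \<pi> t] by (simp add: hist_wf_def)

lemma hist_wf_mono: "hist_wf \<pi> T h \<Longrightarrow> s \<le> s' \<Longrightarrow> s' \<le> T \<Longrightarrow> h ! s \<subseteq> h ! s'"
proof (induction s')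
  case (Suc s')
  show ?case
  proof (cases "s = Suc s'")
    case False
    then have "h ! s \<subseteq> h ! s'" using Suc by simp
    moreover have "h ! s' \<subseteq> h ! Suc s'" using Suc.prems by (simp add: hist_wf_def)
    ultimately show ?thesis by blast
  qed simp
qed simp

lemma hist_wf_subset_knocked:
  "hist_wf \<pi> T h \<Longrightarrow> s \<le> s' \<Longrightarrow> s' \<le> T \<Longrightarrow> h ! s' \<subseteq> h ! s \<union> \<pi> ` {s..<s'}"
proof (induction s')
  case (Suc s')
  show ?case
  proof (cases "s = Suc s'")
    case False
    then have "h ! s' \<subseteq> h ! s \<union> \<pi> ` {s..<s'}" using Suc by simp
    moreover have "h ! Suc s' \<subseteq> insert (\<pi> s') (h ! s')" using Suc.prems by (simp add: hist_wf_def)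
    moreover have "s \<le> s'" using Suc.prems False by simp
    then have "\<pi> s' \<in> \<pi> ` {s..<Suc s'}" "\<pi> ` {s..<s'} \<subseteq> \<pi> ` {s..<Suc s'}" by auto
    ultimately show ?thesis by blast
  qed simp
qed simp

lemma nn_integral_pmf_mono:
  "(\<And>x. x \<in> set_pmf M \<Longrightarrow> f x \<le> g x) \<Longrightarrow> (\<integral>\<^sup>+x. f x \<partial>measure_pmf M) \<le> (\<integral>\<^sup>+x. g x \<partial>measure_pmf M)"
  by (intro nn_integral_mono_AE) (auto simp: AE_measure_pmf_iff)

lemma nn_integral_pmf_cong:
  "(\<And>x. x \<in> set_pmf M \<Longrightarrow> f x = g x) \<Longrightarrow> (\<integral>\<^sup>+x. f x \<partial>measure_pmf M) = (\<integral>\<^sup>+x. g x \<partial>measure_pmf M)"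
  by (intro nn_integral_cong_AE) (auto simp: AE_measure_pmf_iff)

lemma nn_integral_pmf_const: "(\<And>x. x \<in> set_pmf M \<Longrightarrow> f x = c) \<Longrightarrow> (\<integral>\<^sup>+x. f x \<partial>measure_pmf M) = c"
  using nn_integral_pmf_cong[of M f "\<lambda>_. c"] by (simp add: measure_pmf.emeasure_space_1)

lemma nn_integral_hist_supermartingale:
  assumes "\<And>t h. a \<le> t \<Longrightarrow> t < b \<Longrightarrow> h \<in> set_pmf (hist \<phi> \<pi> t) \<Longrightarrow>
             (\<integral>\<^sup>+h'. f (Suc t) h' \<partial>hist_step \<phi> \<pi> t h) \<le> f t h"
  shows "a \<le> b \<Longrightarrow> (\<integral>\<^sup>+h. f b h \<partial>hist \<phi> \<pi> b) \<le> (\<integral>\<^sup>+h. f a h \<partial>hist \<phi> \<pi> a)"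
  using assms
proof (induction b)
  case (Suc b)
  show ?case
  proof (cases "a = Suc b")
    case False
    then have ab: "a \<le> b" using Suc.prems by simp
    have "(\<integral>\<^sup>+h. f (Suc b) h \<partial>hist \<phi> \<pi> (Suc b))
        = (\<integral>\<^sup>+h. (\<integral>\<^sup>+h'. f (Suc b) h' \<partial>hist_step \<phi> \<pi> b h) \<partial>hist \<phi> \<pi> b)"
      unfolding hist_Suc_step by simp
    also have "\<dots> \<le> (\<integral>\<^sup>+h. f b h \<partial>hist \<phi> \<pi> b)"
      by (rule nn_integral_pmf_mono) (auto intro!: Suc.prems(2) ab)
    also have "\<dots> \<le> (\<integral>\<^sup>+h. f a h \<partial>hist \<phi> \<pi> a)"
      using Suc.IH[OF ab] Suc.prems by auto
    finally show ?thesis .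
  qed simp
qed simp

lemma nn_integral_hist_last:
  "(\<integral>\<^sup>+h. f (h ! c) \<partial>hist \<phi> \<pi> c) = (\<integral>\<^sup>+h. f (last h) \<partial>hist \<phi> \<pi> c)"
  by (intro nn_integral_pmf_cong) (simp add: length_hist last_eq_nth_length)

lemma nn_integral_hist_nth:
  "c \<le> T \<Longrightarrow> (\<integral>\<^sup>+h. f (h ! c) \<partial>hist \<phi> \<pi> T) = (\<integral>\<^sup>+h. f (last h) \<partial>hist \<phi> \<pi> c)"
proof (induction T)
  case 0
  then have "c = 0" by simp
  then show ?case by (simp only: nn_integral_hist_last)
next
  case (Suc T)
  show ?case
  proof (cases "c = Suc T")
    case True
    then show ?thesis by (simp only: nn_integral_hist_last)
  next
    case False
    then have cT: "c \<le> T" using Suc.prems by simp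
    have "(\<integral>\<^sup>+h. f (h ! c) \<partial>hist \<phi> \<pi> (Suc T))
        = (\<integral>\<^sup>+h. (\<integral>\<^sup>+h'. f (h' ! c) \<partial>hist_step \<phi> \<pi> T h) \<partial>hist \<phi> \<pi> T)"
      unfolding hist_Suc_step by simp
    also have "\<dots> = (\<integral>\<^sup>+h. f (h ! c) \<partial>hist \<phi> \<pi> T)"
    proof (rule nn_integral_pmf_cong)
      fix h assume h: "h \<in> set_pmf (hist \<phi> \<pi> T)"
      show "(\<integral>\<^sup>+h'. f (h' ! c) \<partial>hist_step \<phi> \<pi> T h) = f (h ! c)"
      proof (rule nn_integral_pmf_const)
        fix h' assume "h' \<in> set_pmf (hist_step \<phi> \<pi> T h)"
        then obtain x where "h' = h @ [x]" using set_pmf_hist_step by blast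
        then show "f (h' ! c) = f (h ! c)" using length_hist[OF h] cT by (simp add: nth_append)
      qed
    qed
    also have "\<dots> = (\<integral>\<^sup>+h. f (last h) \<partial>hist \<phi> \<pi> c)" using Suc.IH[OF cT] .
    finally show ?thesis .
  qed
qed

section \<open>Monotone, positively correlated configurations\<close>

definition door_args :: "nat \<Rightarrow> nat set list \<Rightarrow> bool" where
  "door_args i Xs \<longleftrightarrow> (\<forall>X\<in>set Xs. X \<subseteq> {1..<i})"

lemma door_args_Nil [simp]: "door_args i []"
  by (simp add: door_args_def)

lemma door_args_Cons [simp]: "door_args i (X # Xs) \<longleftrightarrow> X \<subseteq> {1..<i} \<and> door_args i Xs"
  by (simp add: door_args_def)

lemma door_args_append [simp]: "door_args i (Xs @ Ys) \<longleftrightarrow> door_args i Xs \<and> door_args i Ys"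
  by (auto simp: door_args_def)

lemma door_args_replicate [simp]: "X \<subseteq> {1..<i} \<Longrightarrow> door_args i (replicate n X)"
  by (simp add: door_args_def)

lemma door_args_knock_args [simp]: "door_args i (knock_args \<pi> i h t)"
  by (auto simp: door_args_def knock_args_def)

lemma door_args_adm_seq: "Xs \<noteq> [] \<Longrightarrow> door_args i Xs \<Longrightarrow> adm_seq i Xs"
  by (simp add: adm_seq_def door_args_def)

lemma door_args_subseq: "subseq Ys Xs \<Longrightarrow> door_args i Xs \<Longrightarrow> door_args i Ys"
  unfolding door_args_def by (auto dest: list_emb_set)

lemma subseq_replicate: "n \<le> m \<Longrightarrow> subseq (replicate n x) (replicate m x)"
  by (metis le_add_diff_inverse replicate_add subseq_rev_drop_many subseq_order.order_refl)

lemma cond_prob_bounds: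
  fixes f0 f1 :: real
  assumes "0 \<le> f0" "f0 \<le> f1" "f1 \<le> 1"
  shows "0 \<le> (f1 - f0) / (1 - f0) \<and> (f1 - f0) / (1 - f0) \<le> 1"
proof (cases "f0 = 1")
  case False
  then have "f0 < 1" using assms by simp
  then show ?thesis using assms by (simp add: field_simps)
qed simp

lemma cond_prob_complement:
  fixes f0 f1 :: real
  assumes "f0 \<le> f1" "f1 < 1"
  shows "1 - (f1 - f0) / (1 - f0) = (1 - f1) / (1 - f0)"
  using assms by (simp add: field_simps)

lemma cond_prob_survival_le:
  fixes f0 f1 N q :: real
  assumes "0 \<le> N" "0 \<le> f0" "f0 \<le> f1" "f1 \<le> 1" "q = (f1 - f0) / (1 - f0)"
  shows "(1 - q) * (N / (1 - f1)) \<le> N / (1 - f0)"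
proof (cases "f1 = 1")
  case False
  then have "f1 < 1" using assms by simp
  then have "1 - q = (1 - f1) / (1 - f0)" "1 - f1 \<noteq> 0"
    using assms cond_prob_complement[of f0 f1] by simp_all
  then have "(1 - q) * (N / (1 - f1)) = N / (1 - f0)"
    by (simp add: times_divide_times_eq mult.commute[of "1 - f0"])
  then show ?thesis by simp
qed (use assms in \<open>auto simp: divide_nonneg_nonneg\<close>)

lemma cond_prob_mix_le:
  fixes f0 f1 A q :: real
  assumes "0 \<le> f0" "f0 \<le> f1" "f1 \<le> A" "A \<le> 1" "q = (f1 - f0) / (1 - f0)"
  shows "q + (1 - q) * ((A - f1) / (1 - f1)) \<le> (A - f0) / (1 - f0)"
proof (cases "f1 = 1")
  case True
  then show ?thesis using assms by simp
next
  case False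
  then have "f1 < 1" using assms by simp
  then have "1 - q = (1 - f1) / (1 - f0)" "1 - f1 \<noteq> 0"
    using assms cond_prob_complement[of f0 f1] by simp_all
  then have "(1 - q) * ((A - f1) / (1 - f1)) = (A - f1) / (1 - f0)"
    by (simp add: times_divide_times_eq mult.commute[of "1 - f0"])
  then have "q + (1 - q) * ((A - f1) / (1 - f1)) = q + (A - f1) / (1 - f0)" by simp
  also have "\<dots> = ((f1 - f0) + (A - f1)) / (1 - f0)"
    unfolding assms(5) by (rule add_divide_distrib[symmetric])
  finally show ?thesis by simp
qed

lemma ennreal_convex_comb:
  fixes a b q :: real
  assumes "0 \<le> a" "0 \<le> b" "0 \<le> q" "q \<le> 1"
  shows "ennreal a * ennreal q + ennreal b * ennreal (1 - q) = ennreal (q * a + (1 - q) * b)"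
proof -
  have "ennreal (q * a + (1 - q) * b) = ennreal (q * a) + ennreal ((1 - q) * b)"
    using assms by (intro ennreal_plus) auto
  also have "\<dots> = ennreal a * ennreal q + ennreal b * ennreal (1 - q)"
    using assms by (simp add: ennreal_mult mult.commute)
  finally show ?thesis by simp
qed

locale door_config =
  fixes d :: nat and \<phi> :: "nat \<Rightarrow> nat set list \<Rightarrow> real"
  assumes config: "configuration d \<phi>"
begin

lemma config_bounds: "i \<in> {1..d} \<Longrightarrow> adm_seq i Xs \<Longrightarrow> 0 \<le> \<phi> i Xs \<and> \<phi> i Xs \<le> 1"
  using config unfolding configuration_def by blast

lemma config_mono_subseq:
  "i \<in> {1..d} \<Longrightarrow> adm_seq i Xs \<Longrightarrow> adm_seq i Ys \<Longrightarrow> subseq Ys Xs \<Longrightarrow> \<phi> i Ys \<le> \<phi> i Xs"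
  using config unfolding configuration_def by blast

lemma config_mono_subsets:
  "i \<in> {1..d} \<Longrightarrow> adm_seq i Xs \<Longrightarrow> adm_seq i Ys \<Longrightarrow> list_all2 (\<subseteq>) Ys Xs \<Longrightarrow> \<phi> i Ys \<le> \<phi> i Xs"
  using config unfolding configuration_def by blast

lemma phi0_bounds: "i \<in> {1..d} \<Longrightarrow> door_args i Xs \<Longrightarrow> 0 \<le> phi0 \<phi> i Xs \<and> phi0 \<phi> i Xs \<le> 1"
  unfolding phi0_def using config_bounds door_args_adm_seq by simp

lemma phi0_mono_subseq:
  assumes "i \<in> {1..d}" "door_args i Xs" "subseq Ys Xs"
  shows "phi0 \<phi> i Ys \<le> phi0 \<phi> i Xs"
proof (cases "Ys = []")
  case True
  then show ?thesis using phi0_bounds[OF assms(1,2)] by (simp add: phi0_def)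
next
  case False
  then have "Xs \<noteq> []" using assms(3) by auto
  moreover have "door_args i Ys" using door_args_subseq assms(2,3) by blast
  ultimately have "\<phi> i Ys \<le> \<phi> i Xs"
    using config_mono_subseq door_args_adm_seq assms False by blast
  then show ?thesis using \<open>Xs \<noteq> []\<close> False by (simp add: phi0_def)
qed

lemma phi0_mono_subsets:
  assumes "i \<in> {1..d}" "door_args i Xs" "door_args i Ys" "list_all2 (\<subseteq>) Ys Xs"
  shows "phi0 \<phi> i Ys \<le> phi0 \<phi> i Xs"
proof (cases "Ys = []")
  case False
  then have "Xs \<noteq> []" using assms(4) by auto
  then have "\<phi> i Ys \<le> \<phi> i Xs" using config_mono_subsets door_args_adm_seq assms False by blast
  then show ?thesis using \<open>Xs \<noteq> []\<close> False by (simp add: phi0_def)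
qed (use assms in \<open>simp add: phi0_def\<close>)

lemma phi0_le_replicate:
  assumes "i \<in> {1..d}" "door_args i Xs" "length Xs \<le> n"
  shows "phi0 \<phi> i Xs \<le> phi0 \<phi> i (replicate n {1..<i})"
proof -
  have "list_all2 (\<subseteq>) Xs (replicate (length Xs) {1..<i})"
    using assms(2) by (auto simp: list_all2_conv_all_nth door_args_def)
  then have "phi0 \<phi> i Xs \<le> phi0 \<phi> i (replicate (length Xs) {1..<i})"
    by (rule phi0_mono_subsets[OF assms(1) door_args_replicate[OF order_refl] assms(2)])
  also have "\<dots> \<le> phi0 \<phi> i (replicate n {1..<i})"
    using phi0_mono_subseq[OF assms(1) _ subseq_replicate[OF assms(3)]] by simp
  finally show ?thesis .
qed

lemma phi0_snoc_bounds:
  assumes "i \<in> {1..d}" "door_args i Xs" "X \<subseteq> {1..<i}"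
  shows "0 \<le> phi0 \<phi> i Xs" "phi0 \<phi> i Xs \<le> phi0 \<phi> i (Xs @ [X])" "phi0 \<phi> i (Xs @ [X]) \<le> 1"
proof -
  have args: "door_args i (Xs @ [X])" using assms by (simp add: door_args_def)
  show "0 \<le> phi0 \<phi> i Xs" using phi0_bounds[OF assms(1,2)] by simp
  show "phi0 \<phi> i Xs \<le> phi0 \<phi> i (Xs @ [X])"
    by (rule phi0_mono_subseq[OF assms(1) args]) (simp add: subseq_rev_drop_many)
  show "phi0 \<phi> i (Xs @ [X]) \<le> 1" using phi0_bounds[OF assms(1) args] by simp
qed

lemma fund_bounds: "i \<in> {1..d} \<Longrightarrow> 0 \<le> fund \<phi> i n \<and> fund \<phi> i n \<le> 1"
  unfolding fund_def using phi0_bounds[of i "replicate n {1..<i}"] by auto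

lemma fund_antimono: "i \<in> {1..d} \<Longrightarrow> m \<le> n \<Longrightarrow> fund \<phi> i n \<le> fund \<phi> i m"
  unfolding fund_def using phi0_mono_subseq[OF _ door_args_replicate[OF order_refl] subseq_replicate] by simp

end

section \<open>Bounds along a fixed knock sequence\<close>

definition first_closed :: "nat \<Rightarrow> nat set \<Rightarrow> bool" where
  "first_closed i X \<longleftrightarrow> {1..<i} \<subseteq> X \<and> i \<notin> X"

locale knocking = door_config +
  fixes \<pi> :: "nat \<Rightarrow> nat"
  assumes knock_range: "\<pi> t \<in> {1..d}"
begin

lemma open_prob_eq:
  "length h = Suc t \<Longrightarrow> open_prob \<phi> \<pi> t h =
     (phi0 \<phi> (\<pi> t) (knock_args \<pi> (\<pi> t) h t @ [last h \<inter> {1..<\<pi> t}]) - phi0 \<phi> (\<pi> t) (knock_args \<pi> (\<pi> t) h t))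
     / (1 - phi0 \<phi> (\<pi> t) (knock_args \<pi> (\<pi> t) h t))"
  unfolding open_prob_def by (simp add: phi0_def last_eq_nth_length)

lemma phi0_knock_args_snoc_bounds:
  "0 \<le> phi0 \<phi> (\<pi> t) (knock_args \<pi> (\<pi> t) h t)"
  "phi0 \<phi> (\<pi> t) (knock_args \<pi> (\<pi> t) h t) \<le> phi0 \<phi> (\<pi> t) (knock_args \<pi> (\<pi> t) h t @ [X \<inter> {1..<\<pi> t}])"
  "phi0 \<phi> (\<pi> t) (knock_args \<pi> (\<pi> t) h t @ [X \<inter> {1..<\<pi> t}]) \<le> 1"
  using phi0_snoc_bounds[OF knock_range door_args_knock_args, of "X \<inter> {1..<\<pi> t}"] by auto

lemma open_prob_bounds: "length h = Suc t \<Longrightarrow> 0 \<le> open_prob \<phi> \<pi> t h \<and> open_prob \<phi> \<pi> t h \<le> 1"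
  unfolding open_prob_eq using cond_prob_bounds phi0_knock_args_snoc_bounds by blast

lemma nn_integral_hist_step_closed:
  assumes "\<pi> t \<notin> last h" "length h = Suc t"
  shows "(\<integral>\<^sup>+h'. f h' \<partial>hist_step \<phi> \<pi> t h) =
     f (h @ [insert (\<pi> t) (last h)]) * ennreal (open_prob \<phi> \<pi> t h) + f (h @ [last h]) * ennreal (1 - open_prob \<phi> \<pi> t h)"
  using open_prob_bounds[OF assms(2)] assms by (simp add: hist_step_closed)

lemma set_pmf_hist_step_closed:
  assumes "\<pi> t \<notin> last h" "length h = Suc t" "h' \<in> set_pmf (hist_step \<phi> \<pi> t h)"
  shows "h' = h @ [insert (\<pi> t) (last h)] \<or> (h' = h @ [last h] \<and> open_prob \<phi> \<pi> t h < 1)"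
proof -
  from assms obtain b where b: "b \<in> set_pmf (bernoulli_pmf (open_prob \<phi> \<pi> t h))"
    "h' = h @ [if b then insert (\<pi> t) (last h) else last h]"
    by (auto simp: hist_step_closed)
  show ?thesis
  proof (cases b)
    case False
    then have "pmf (bernoulli_pmf (open_prob \<phi> \<pi> t h)) False > 0" using b(1) by (simp add: set_pmf_eq')
    then have "open_prob \<phi> \<pi> t h < 1" using open_prob_bounds[OF assms(2)] by simp
    then show ?thesis using b False by simp
  qed (use b in simp)
qed

lemma phi0_knock_args_less_1:
  "h \<in> set_pmf (hist \<phi> \<pi> t) \<Longrightarrow> j \<notin> last h \<Longrightarrow> phi0 \<phi> j (knock_args \<pi> j h t) < 1"
proof (induction t arbitrary: h)
  case 0
  then show ?case by (simp add: phi0_def)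
next
  case (Suc t)
  from Suc.prems obtain g where g: "g \<in> set_pmf (hist \<phi> \<pi> t)" "h \<in> set_pmf (hist_step \<phi> \<pi> t g)"
    unfolding hist_Suc_step by auto
  have lg: "length g = Suc t" using length_hist[OF g(1)] .
  show ?case
  proof (cases "\<pi> t \<in> last g")
    case True
    then have h: "h = g @ [last g]" using g(2) by (simp add: hist_step_open)
    then have "j \<notin> last g" "j \<noteq> \<pi> t" using Suc.prems True by auto
    then show ?thesis using Suc.IH[OF g(1)] h knock_args_snoc[OF lg] by simp
  next
    case False
    note cases = set_pmf_hist_step_closed[OF False lg g(2)]
    show ?thesis
    proof (cases "j = \<pi> t")
      case False
      have "j \<notin> last g" using cases Suc.prems by auto
      moreover have "knock_args \<pi> j h (Suc t) = knock_args \<pi> j g t"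
        using cases False knock_args_snoc[OF lg] by auto
      ultimately show ?thesis using Suc.IH[OF g(1)] by simp
    next
      case True
      then have h: "h = g @ [last g]" "open_prob \<phi> \<pi> t g < 1" using cases Suc.prems by auto
      have "phi0 \<phi> j (knock_args \<pi> j g t) < 1" using Suc.IH[OF g(1)] False True by simp
      moreover have "knock_args \<pi> j h (Suc t) = knock_args \<pi> j g t @ [last g \<inter> {1..<j}]"
        using h knock_args_snoc[OF lg] True by simp
      ultimately show ?thesis using h(2) open_prob_eq[OF lg] True by (simp add: field_simps)
    qed
  qed
qed


context
  fixes T :: nat
begin

definition open_bound :: "nat \<Rightarrow> real" where
  "open_bound j = phi0 \<phi> j (replicate (knock_count \<pi> j T) {1..<j})"

text \<open>By monotonicity and positive correlation, \<open>open_bound j\<close> dominates the value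
  of \<open>\<phi> j\<close> on the whole sequence of knocks on door \<open>j\<close> up to time \<open>T\<close>. Hence
  \<open>door_weight j t h\<close> bounds the conditional probability that door \<open>j\<close> is open at time \<open>T\<close>,
  and the product of these weights is a supermartingale.\<close>

definition door_weight :: "nat \<Rightarrow> nat \<Rightarrow> nat set list \<Rightarrow> real" where
  "door_weight j t h = (if j \<in> last h then 1 else
     (open_bound j - phi0 \<phi> j (knock_args \<pi> j h t)) / (1 - phi0 \<phi> j (knock_args \<pi> j h t)))"

definition open_weight :: "nat \<Rightarrow> nat set list \<Rightarrow> ennreal" where
  "open_weight t h = ennreal (\<Prod>j\<in>{1..d}. door_weight j t h)"

lemma open_bound_le_1: "j \<in> {1..d} \<Longrightarrow> open_bound j \<le> 1"
  unfolding open_bound_def using phi0_bounds[OF _ door_args_replicate[OF order_refl]] by blast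

lemma phi0_knock_args_le_open_bound:
  assumes "j \<in> {1..d}" "door_args j Xs" "length Xs \<le> knock_count \<pi> j T"
  shows "phi0 \<phi> j Xs \<le> open_bound j"
  unfolding open_bound_def by (rule phi0_le_replicate[OF assms])

lemma door_weight_nonneg: "j \<in> {1..d} \<Longrightarrow> t \<le> T \<Longrightarrow> 0 \<le> door_weight j t h"
proof -
  assume j: "j \<in> {1..d}" and t: "t \<le> T"
  have "phi0 \<phi> j (knock_args \<pi> j h t) \<le> open_bound j"
    using phi0_knock_args_le_open_bound[OF j] length_knock_args knock_count_mono[OF t] by simp
  moreover have "phi0 \<phi> j (knock_args \<pi> j h t) \<le> 1" using phi0_bounds[OF j] by simp
  ultimately show ?thesis unfolding door_weight_def by (auto intro: divide_nonneg_nonneg)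
qed

lemma door_weight_unchanged:
  assumes "length h = Suc t" "last h \<subseteq> x" "x \<subseteq> insert (\<pi> t) (last h)" "j \<noteq> \<pi> t \<or> j \<in> last h"
  shows "door_weight j (Suc t) (h @ [x]) = door_weight j t h"
proof (cases "j \<in> last h")
  case True
  then show ?thesis using assms by (auto simp: door_weight_def)
next
  case False
  then have "j \<noteq> \<pi> t" "(j \<in> x) = (j \<in> last h)" using assms by auto
  then show ?thesis using knock_args_snoc[OF assms(1)] by (simp add: door_weight_def)
qed

lemma door_weight_knocked_step:
  assumes "t < T" "length h = Suc t" "\<pi> t \<notin> last h"
  shows "open_prob \<phi> \<pi> t h + (1 - open_prob \<phi> \<pi> t h) * door_weight (\<pi> t) (Suc t) (h @ [last h])
           \<le> door_weight (\<pi> t) t h"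
proof -
  define i where "i = \<pi> t"
  have i: "i \<in> {1..d}" using knock_range i_def by simp
  define f0 where "f0 = phi0 \<phi> i (knock_args \<pi> i h t)"
  define f1 where "f1 = phi0 \<phi> i (knock_args \<pi> i h t @ [last h \<inter> {1..<i}])"
  have q: "open_prob \<phi> \<pi> t h = (f1 - f0) / (1 - f0)"
    unfolding open_prob_eq[OF assms(2)] f0_def f1_def i_def ..
  have f0: "0 \<le> f0" "f0 \<le> f1"
    unfolding f0_def f1_def i_def using phi0_knock_args_snoc_bounds by auto
  have "length (knock_args \<pi> i h t @ [last h \<inter> {1..<i}]) \<le> knock_count \<pi> i T"
    using length_knock_args[of \<pi> i h "Suc t"] knock_args_Suc[of \<pi> i h t]
      knock_count_mono[of "Suc t" T \<pi> i] assms(1) i_def by simp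
  then have f1: "f1 \<le> open_bound i"
    unfolding f1_def by (intro phi0_knock_args_le_open_bound[OF i]) auto
  have "door_weight i (Suc t) (h @ [last h]) = (open_bound i - f1) / (1 - f1)"
    unfolding door_weight_def f1_def using assms(3) knock_args_snoc[OF assms(2)] i_def by simp
  moreover have "door_weight i t h = (open_bound i - f0) / (1 - f0)"
    unfolding door_weight_def f0_def using assms(3) i_def by simp
  ultimately show ?thesis
    using cond_prob_mix_le[OF f0 f1 open_bound_le_1[OF i] q] i_def by simp
qed

lemma open_weight_step:
  assumes t: "t < T" and h: "h \<in> set_pmf (hist \<phi> \<pi> t)"
  shows "(\<integral>\<^sup>+h'. open_weight (Suc t) h' \<partial>hist_step \<phi> \<pi> t h) \<le> open_weight t h"
proof -
  have lh: "length h = Suc t" using length_hist[OF h] .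
  define i where "i = \<pi> t"
  have i: "i \<in> {1..d}" using knock_range i_def by simp
  have split: "(\<Prod>j\<in>{1..d}. g j) = g i * (\<Prod>j\<in>{1..d} - {i}. g j)" for g :: "nat \<Rightarrow> real"
    using i by (simp add: prod.remove)
  define R where "R = (\<Prod>j\<in>{1..d} - {i}. door_weight j t h)"
  have R: "0 \<le> R" unfolding R_def using door_weight_nonneg t by (auto intro!: prod_nonneg)
  have others: "(\<Prod>j\<in>{1..d} - {i}. door_weight j (Suc t) (h @ [x])) = R"
    if "last h \<subseteq> x" "x \<subseteq> insert i (last h)" for x
    unfolding R_def using door_weight_unchanged[OF lh that[unfolded i_def]] i_def
    by (intro prod.cong) auto
  show ?thesis
  proof (cases "i \<in> last h")
    case True
    have "open_weight (Suc t) (h @ [last h]) = open_weight t h"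
      unfolding open_weight_def using door_weight_unchanged[OF lh] True i_def
      by (intro arg_cong[where f = ennreal] prod.cong) auto
    then show ?thesis using True i_def by (simp add: hist_step_open)
  next
    case False
    define q where "q = open_prob \<phi> \<pi> t h"
    define w where "w = door_weight i (Suc t) (h @ [last h])"
    have q: "0 \<le> q" "q \<le> 1" using open_prob_bounds[OF lh] q_def by auto
    have w: "0 \<le> w" unfolding w_def using door_weight_nonneg[OF i] t by simp
    have w1: "door_weight i (Suc t) (h @ [insert i (last h)]) = 1" by (simp add: door_weight_def)
    have "(\<integral>\<^sup>+h'. open_weight (Suc t) h' \<partial>hist_step \<phi> \<pi> t h)
        = open_weight (Suc t) (h @ [insert i (last h)]) * ennreal q + open_weight (Suc t) (h @ [last h]) * ennreal (1 - q)"
      using nn_integral_hist_step_closed[OF _ lh] False unfolding i_def q_def by simp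
    also have "\<dots> = ennreal (1 * R) * ennreal q + ennreal (w * R) * ennreal (1 - q)"
      unfolding open_weight_def split[of "\<lambda>j. door_weight j (Suc t) (h @ [insert i (last h)])"]
        split[of "\<lambda>j. door_weight j (Suc t) (h @ [last h])"] w_def
        others[of "insert i (last h)", OF subset_insertI order_refl] others[of "last h", OF order_refl subset_insertI] w1
      by simp
    also have "\<dots> = ennreal ((q + (1 - q) * w) * R)"
      using q w R by (subst ennreal_convex_comb) (auto simp: algebra_simps)
    also have "\<dots> \<le> ennreal (door_weight i t h * R)"
      using door_weight_knocked_step[OF t lh] False R unfolding q_def w_def i_def
      by (intro ennreal_leI mult_right_mono) auto
    also have "\<dots> = open_weight t h" unfolding open_weight_def R_def split[of "\<lambda>j. door_weight j t h"] ..
    finally show ?thesis .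
  qed
qed

lemma all_open_prob_le:
  "emeasure (measure_pmf (hist \<phi> \<pi> T)) {h. {1..d} \<subseteq> last h} \<le> ennreal (\<Prod>j\<in>{1..d}. 1 - fund \<phi> j (knock_count \<pi> j T))"
proof -
  have "emeasure (measure_pmf (hist \<phi> \<pi> T)) {h. {1..d} \<subseteq> last h}
      = (\<integral>\<^sup>+h. indicator {h. {1..d} \<subseteq> last h} h \<partial>hist \<phi> \<pi> T)"
    by simp
  also have "\<dots> \<le> (\<integral>\<^sup>+h. open_weight T h \<partial>hist \<phi> \<pi> T)"
  proof (rule nn_integral_pmf_mono)
    fix h
    show "indicator {h. {1..d} \<subseteq> last h} h \<le> open_weight T h"
    proof (cases "{1..d} \<subseteq> last h")
      case True
      then have "(\<Prod>j\<in>{1..d}. door_weight j T h) = 1" by (auto simp: door_weight_def intro!: prod.neutral)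
      then show ?thesis using True by (simp add: open_weight_def)
    qed (simp add: open_weight_def)
  qed
  also have "\<dots> \<le> (\<integral>\<^sup>+h. open_weight 0 h \<partial>hist \<phi> \<pi> 0)"
    by (rule nn_integral_hist_supermartingale) (auto intro: open_weight_step)
  also have "\<dots> = ennreal (\<Prod>j\<in>{1..d}. 1 - fund \<phi> j (knock_count \<pi> j T))"
    by (simp add: open_weight_def door_weight_def open_bound_def fund_def phi0_def)
  finally show ?thesis .
qed

end


context
  fixes i :: nat
  assumes door: "i \<in> {1..d}"
begin

text \<open>The reciprocal of the probability that door \<open>i\<close> is still closed, given its knock history.\<close>

definition closed_weight :: "nat \<Rightarrow> nat set list \<Rightarrow> ennreal" where
  "closed_weight t h = ennreal (if i \<in> last h then 0 else 1 / (1 - phi0 \<phi> i (knock_args \<pi> i h t)))"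

lemma closed_weight_step:
  assumes h: "h \<in> set_pmf (hist \<phi> \<pi> t)"
  shows "(\<integral>\<^sup>+h'. closed_weight (Suc t) h' \<partial>hist_step \<phi> \<pi> t h) \<le> closed_weight t h"
proof -
  have lh: "length h = Suc t" using length_hist[OF h] .
  show ?thesis
  proof (cases "\<pi> t \<in> last h")
    case True
    then show ?thesis by (auto simp: hist_step_open closed_weight_def knock_args_snoc[OF lh])
  next
    case False
    note integral = nn_integral_hist_step_closed[OF False lh, of "closed_weight (Suc t)"]
    note q = open_prob_bounds[OF lh]
    show ?thesis
    proof (cases "\<pi> t = i")
      case False
      define u where "u = (if i \<in> last h then 0 else 1 / (1 - phi0 \<phi> i (knock_args \<pi> i h t)))"
      have u: "0 \<le> u" unfolding u_def using phi0_bounds[OF door, of "knock_args \<pi> i h t"] by simp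
      have "closed_weight (Suc t) (h @ [insert (\<pi> t) (last h)]) = ennreal u"
        "closed_weight (Suc t) (h @ [last h]) = ennreal u" "closed_weight t h = ennreal u"
        unfolding closed_weight_def u_def using False by (auto simp: knock_args_snoc[OF lh])
      then show ?thesis unfolding integral using q u by (simp add: ennreal_convex_comb algebra_simps)
    next
      case True
      define f0 where "f0 = phi0 \<phi> i (knock_args \<pi> i h t)"
      define f1 where "f1 = phi0 \<phi> i (knock_args \<pi> i h t @ [last h \<inter> {1..<i}])"
      have f: "0 \<le> f0" "f0 \<le> f1" "f1 \<le> 1"
        unfolding f0_def f1_def using phi0_knock_args_snoc_bounds True by auto
      have "closed_weight (Suc t) (h @ [insert (\<pi> t) (last h)]) = 0"
        unfolding closed_weight_def using True by simp
      moreover have "closed_weight (Suc t) (h @ [last h]) = ennreal (1 / (1 - f1))"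
        unfolding closed_weight_def f1_def using True \<open>\<pi> t \<notin> last h\<close> by (simp add: knock_args_snoc[OF lh])
      ultimately have "(\<integral>\<^sup>+h'. closed_weight (Suc t) h' \<partial>hist_step \<phi> \<pi> t h)
          = ennreal (1 / (1 - f1)) * ennreal (1 - open_prob \<phi> \<pi> t h)"
        unfolding integral by simp
      also have "\<dots> = ennreal ((1 - open_prob \<phi> \<pi> t h) * (1 / (1 - f1)))"
        using q f by (subst ennreal_mult) (auto simp: mult.commute)
      also have "\<dots> \<le> ennreal (1 / (1 - f0))"
        using cond_prob_survival_le[of 1 f0 f1] f open_prob_eq[OF lh] True
        unfolding f0_def f1_def by (intro ennreal_leI) simp
      also have "\<dots> = closed_weight t h"
        unfolding closed_weight_def f0_def using True \<open>\<pi> t \<notin> last h\<close> by simp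
      finally show ?thesis .
    qed
  qed
qed

lemma nn_integral_closed_weight_le_1: "(\<integral>\<^sup>+h. closed_weight t h \<partial>hist \<phi> \<pi> t) \<le> 1"
proof -
  have "(\<integral>\<^sup>+h. closed_weight t h \<partial>hist \<phi> \<pi> t) \<le> (\<integral>\<^sup>+h. closed_weight 0 h \<partial>hist \<phi> \<pi> 0)"
    by (rule nn_integral_hist_supermartingale) (auto intro: closed_weight_step)
  also have "\<dots> = 1" by (simp add: closed_weight_def phi0_def)
  finally show ?thesis .
qed

context
  fixes a b :: nat
  assumes block: "a < b" "\<And>s. a \<le> s \<Longrightarrow> s < b \<Longrightarrow> \<pi> s = i"
begin

text \<open>On the event that doors \<open>1, \<dots>, i - 1\<close> are open and door \<open>i\<close> is closed, the weight
  bounds the conditional probability that door \<open>i\<close> stays closed for the rest of the block.\<close>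

definition block_weight :: "nat \<Rightarrow> nat set list \<Rightarrow> ennreal" where
  "block_weight t h = ennreal (if first_closed i (last h) then
      (1 - phi0 \<phi> i (knock_args \<pi> i h t @ replicate (b - t) {1..<i})) / (1 - phi0 \<phi> i (knock_args \<pi> i h t))
    else 0)"

lemma block_weight_step:
  assumes h: "h \<in> set_pmf (hist \<phi> \<pi> t)" and t: "a \<le> t" "t < b"
  shows "(\<integral>\<^sup>+h'. block_weight (Suc t) h' \<partial>hist_step \<phi> \<pi> t h) \<le> block_weight t h"
proof -
  have lh: "length h = Suc t" using length_hist[OF h] .
  have knock: "\<pi> t = i" using block t by simp
  show ?thesis
  proof (cases "i \<in> last h")
    case True
    then show ?thesis using knock by (simp add: hist_step_open block_weight_def first_closed_def)
  next
    case False
    note integral = nn_integral_hist_step_closed[OF _ lh, of "block_weight (Suc t)"]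
    have opened: "block_weight (Suc t) (h @ [insert (\<pi> t) (last h)]) = 0"
      unfolding block_weight_def first_closed_def using knock by simp
    show ?thesis
    proof (cases "{1..<i} \<subseteq> last h")
      case False
      then have "block_weight (Suc t) (h @ [last h]) = 0" unfolding block_weight_def first_closed_def by simp
      then show ?thesis using integral opened knock \<open>i \<notin> last h\<close> by simp
    next
      case True
      define f0 where "f0 = phi0 \<phi> i (knock_args \<pi> i h t)"
      define f1 where "f1 = phi0 \<phi> i (knock_args \<pi> i h t @ [last h \<inter> {1..<i}])"
      define N where "N = 1 - phi0 \<phi> i (knock_args \<pi> i h t @ replicate (b - t) {1..<i})"
      have f: "0 \<le> f0" "f0 \<le> f1" "f1 \<le> 1"
        unfolding f0_def f1_def using phi0_knock_args_snoc_bounds knock by auto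
      have N: "0 \<le> N" unfolding N_def using phi0_bounds[OF door] by simp
      have "b - t = Suc (b - Suc t)" "last h \<inter> {1..<i} = {1..<i}" using t True by auto
      then have "block_weight (Suc t) (h @ [last h]) = ennreal (N / (1 - f1))"
        unfolding block_weight_def first_closed_def N_def f1_def
        using True False knock knock_args_snoc[OF lh] by simp
      moreover have "block_weight t h = ennreal (N / (1 - f0))"
        unfolding block_weight_def first_closed_def f0_def N_def using True False by simp
      moreover have "(1 - open_prob \<phi> \<pi> t h) * (N / (1 - f1)) \<le> N / (1 - f0)"
        using cond_prob_survival_le[OF N f] open_prob_eq[OF lh] knock unfolding f0_def f1_def by simp
      ultimately show ?thesis
        using integral opened knock False open_prob_bounds[OF lh] f N
        by (simp add: ennreal_mult[symmetric] mult.commute ennreal_leI)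
    qed
  qed
qed

lemma block_weight_start: "block_weight a h \<le> ennreal (fund \<phi> i (b - a)) * closed_weight a h"
proof (cases "first_closed i (last h)")
  case True
  have f0: "phi0 \<phi> i (knock_args \<pi> i h a) \<le> 1" using phi0_bounds[OF door] by simp
  have p: "0 \<le> fund \<phi> i (b - a)" using fund_bounds[OF door] by simp
  have "subseq (replicate (b - a) {1..<i}) (knock_args \<pi> i h a @ replicate (b - a) {1..<i})"
    by (rule subseq_drop_many) simp
  then have "1 - phi0 \<phi> i (knock_args \<pi> i h a @ replicate (b - a) {1..<i}) \<le> fund \<phi> i (b - a)"
    unfolding fund_def using phi0_mono_subseq[OF door] by simp
  then have "block_weight a h \<le> ennreal (fund \<phi> i (b - a) / (1 - phi0 \<phi> i (knock_args \<pi> i h a)))"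
    unfolding block_weight_def using True f0 by (auto intro!: ennreal_leI divide_right_mono)
  also have "\<dots> = ennreal (fund \<phi> i (b - a)) * closed_weight a h"
    unfolding closed_weight_def using True p f0
    by (simp add: first_closed_def ennreal_mult[symmetric])
  finally show ?thesis .
qed (simp add: block_weight_def)

lemma block_weight_end:
  assumes h: "h \<in> set_pmf (hist \<phi> \<pi> b)"
  shows "indicator {h. first_closed i (last h)} h \<le> block_weight b h"
proof (cases "first_closed i (last h)")
  case True
  then have "phi0 \<phi> i (knock_args \<pi> i h b) < 1"
    using phi0_knock_args_less_1[OF h] by (simp add: first_closed_def)
  then show ?thesis using True by (simp add: block_weight_def)
qed simp

lemma first_closed_after_block_prob_le:
  "emeasure (measure_pmf (hist \<phi> \<pi> b)) {h. first_closed i (last h)} \<le> ennreal (fund \<phi> i (b - a))"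
proof -
  have "emeasure (measure_pmf (hist \<phi> \<pi> b)) {h. first_closed i (last h)}
      = (\<integral>\<^sup>+h. indicator {h. first_closed i (last h)} h \<partial>hist \<phi> \<pi> b)"
    by simp
  also have "\<dots> \<le> (\<integral>\<^sup>+h. block_weight b h \<partial>hist \<phi> \<pi> b)"
    by (rule nn_integral_pmf_mono) (rule block_weight_end)
  also have "\<dots> \<le> (\<integral>\<^sup>+h. block_weight a h \<partial>hist \<phi> \<pi> a)"
    using block by (intro nn_integral_hist_supermartingale) (auto intro: block_weight_step)
  also have "\<dots> \<le> (\<integral>\<^sup>+h. ennreal (fund \<phi> i (b - a)) * closed_weight a h \<partial>hist \<phi> \<pi> a)"
    by (rule nn_integral_pmf_mono) (rule block_weight_start)
  also have "\<dots> = ennreal (fund \<phi> i (b - a)) * (\<integral>\<^sup>+h. closed_weight a h \<partial>hist \<phi> \<pi> a)"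
    by (rule nn_integral_cmult) simp
  also have "\<dots> \<le> ennreal (fund \<phi> i (b - a))"
    using mult_left_mono[OF nn_integral_closed_weight_le_1] by simp
  finally show ?thesis .
qed

end

end

end

section \<open>The probability that not all doors are open\<close>

definition not_all_open :: "(nat \<Rightarrow> nat set list \<Rightarrow> real) \<Rightarrow> (nat \<Rightarrow> nat) \<Rightarrow> nat \<Rightarrow> nat \<Rightarrow> ennreal" where
  "not_all_open \<phi> \<pi> d t = emeasure (measure_pmf (hist \<phi> \<pi> t)) {h. \<not> {1..d} \<subseteq> last h}"

lemma Tseq_eq_suminf_not_all_open: "Tseq d \<phi> \<pi> = (\<Sum>t. not_all_open \<phi> \<pi> d t)"
  unfolding Tseq_def not_all_open_def by (simp add: measure_pmf.emeasure_eq_measure)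

lemma not_all_open_le_1: "not_all_open \<phi> \<pi> d t \<le> 1"
  unfolding not_all_open_def by (rule measure_pmf.emeasure_le_1)

lemma emeasure_pmf_last:
  "emeasure (measure_pmf M) {h. Q (last h)} = (\<integral>\<^sup>+h. indicator {X. Q X} (last h) \<partial>measure_pmf M)"
  by (simp add: indicator_def flip: nn_integral_indicator)

lemma not_all_open_antimono:
  assumes "t \<le> t'"
  shows "not_all_open \<phi> \<pi> d t' \<le> not_all_open \<phi> \<pi> d t"
proof -
  have "not_all_open \<phi> \<pi> d t' = (\<integral>\<^sup>+h. indicator {X. \<not> {1..d} \<subseteq> X} (last h) \<partial>hist \<phi> \<pi> t')"
    unfolding not_all_open_def by (rule emeasure_pmf_last)
  also have "\<dots> \<le> (\<integral>\<^sup>+h. indicator {X. \<not> {1..d} \<subseteq> X} (h ! t) \<partial>hist \<phi> \<pi> t')"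
  proof (rule nn_integral_pmf_mono)
    fix h assume h: "h \<in> set_pmf (hist \<phi> \<pi> t')"
    have "h ! t \<subseteq> h ! t'" using hist_wf_mono[OF hist_wf_hist[OF h] assms] by simp
    moreover have "last h = h ! t'" using length_hist[OF h] by (simp add: last_eq_nth_length)
    ultimately show "indicator {X. \<not> {1..d} \<subseteq> X} (last h) \<le> (indicator {X. \<not> {1..d} \<subseteq> X} (h ! t) :: ennreal)"
      by (auto simp: indicator_def)
  qed
  also have "\<dots> = (\<integral>\<^sup>+h. indicator {X. \<not> {1..d} \<subseteq> X} (last h) \<partial>hist \<phi> \<pi> t)"
    by (rule nn_integral_hist_nth[OF assms])
  also have "\<dots> = not_all_open \<phi> \<pi> d t" unfolding not_all_open_def by (rule emeasure_pmf_last[symmetric])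
  finally show ?thesis .
qed

lemma not_all_open_early: "t < d \<Longrightarrow> not_all_open \<phi> \<pi> d t = 1"
proof -
  assume td: "t < d"
  have "\<not> {1..d} \<subseteq> last h" if h: "h \<in> set_pmf (hist \<phi> \<pi> t)" for h
  proof
    have wf: "hist_wf \<pi> t h" by (rule hist_wf_hist[OF h])
    then have "last h \<subseteq> \<pi> ` {0..<t}"
      using hist_wf_subset_knocked[OF wf, of 0 t] length_hist[OF h]
      by (simp add: hist_wf_def last_eq_nth_length)
    moreover assume "{1..d} \<subseteq> last h"
    ultimately have "card {1..d} \<le> card (\<pi> ` {0..<t})" by (intro card_mono) auto
    also have "\<dots> \<le> t" using card_image_le[of "{0..<t}" \<pi>] by simp
    finally show False using td by simp
  qed
  then have "(\<integral>\<^sup>+h. indicator {h. \<not> {1..d} \<subseteq> last h} h \<partial>hist \<phi> \<pi> t) = 1"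
    by (intro nn_integral_pmf_const) simp
  then show ?thesis unfolding not_all_open_def by simp
qed

lemma first_closed_before:
  assumes wf: "hist_wf \<pi> T h" and closed: "\<not> {1..d} \<subseteq> h ! T"
    and before: "\<And>i. i \<in> {1..d} \<Longrightarrow> c i \<le> T"
    and later: "\<And>i s. i \<in> {1..d} \<Longrightarrow> c i \<le> s \<Longrightarrow> s < T \<Longrightarrow> i < \<pi> s"
  shows "\<exists>i\<in>{1..d}. first_closed i (h ! c i)"
proof -
  define i where "i = (LEAST i. i \<in> {1..d} \<and> i \<notin> h ! T)"
  have ex: "\<exists>i. i \<in> {1..d} \<and> i \<notin> h ! T" using closed by auto
  have i: "i \<in> {1..d}" "i \<notin> h ! T" using LeastI_ex[OF ex] unfolding i_def by auto
  have "i \<notin> h ! c i" using hist_wf_mono[OF wf, of "c i" T] before[OF i(1)] i(2) by auto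
  moreover have "j \<in> h ! c i" if j: "j \<in> {1..<i}" for j
  proof -
    have "j \<in> h ! T" using Least_le[of "\<lambda>i. i \<in> {1..d} \<and> i \<notin> h ! T" j] j i(1) unfolding i_def by force
    moreover have "h ! T \<subseteq> h ! c i \<union> \<pi> ` {c i..<T}"
      using hist_wf_subset_knocked[OF wf _ order_refl] before[OF i(1)] by simp
    moreover have "j \<notin> \<pi> ` {c i..<T}" using later[OF i(1)] j by fastforce
    ultimately show ?thesis by blast
  qed
  ultimately show ?thesis using i(1) unfolding first_closed_def by blast
qed

lemma not_all_open_le_sum_first_closed:
  assumes before: "\<And>i. i \<in> {1..d} \<Longrightarrow> c i \<le> T"
    and later: "\<And>i s. i \<in> {1..d} \<Longrightarrow> c i \<le> s \<Longrightarrow> s < T \<Longrightarrow> i < \<pi> s"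
  shows "not_all_open \<phi> \<pi> d T \<le> (\<Sum>i\<in>{1..d}. emeasure (measure_pmf (hist \<phi> \<pi> (c i))) {h. first_closed i (last h)})"
proof -
  have "not_all_open \<phi> \<pi> d T = (\<integral>\<^sup>+h. indicator {X. \<not> {1..d} \<subseteq> X} (last h) \<partial>hist \<phi> \<pi> T)"
    unfolding not_all_open_def by (rule emeasure_pmf_last)
  also have "\<dots> \<le> (\<integral>\<^sup>+h. (\<Sum>i\<in>{1..d}. indicator {X. first_closed i X} (h ! c i)) \<partial>hist \<phi> \<pi> T)"
  proof (rule nn_integral_pmf_mono)
    fix h assume h: "h \<in> set_pmf (hist \<phi> \<pi> T)"
    show "indicator {X. \<not> {1..d} \<subseteq> X} (last h) \<le> (\<Sum>i\<in>{1..d}. indicator {X. first_closed i X} (h ! c i) :: ennreal)"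
    proof (cases "{1..d} \<subseteq> last h")
      case False
      then have "\<not> {1..d} \<subseteq> h ! T" using length_hist[OF h] by (simp add: last_eq_nth_length)
      then obtain i where i: "i \<in> {1..d}" "first_closed i (h ! c i)"
        using first_closed_before[where d = d and c = c, OF hist_wf_hist[OF h] _ before later] by blast
      then have "1 \<le> (\<Sum>i\<in>{1..d}. indicator {X. first_closed i X} (h ! c i) :: ennreal)"
        using member_le_sum[of i "{1..d}" "\<lambda>i. indicator {X. first_closed i X} (h ! c i) :: ennreal"] by simp
      then show ?thesis using False by simp
    qed simp
  qed
  also have "\<dots> = (\<Sum>i\<in>{1..d}. (\<integral>\<^sup>+h. indicator {X. first_closed i X} (h ! c i) \<partial>hist \<phi> \<pi> T))"
    by (rule nn_integral_sum) simp
  also have "\<dots> = (\<Sum>i\<in>{1..d}. (\<integral>\<^sup>+h. indicator {X. first_closed i X} (last h) \<partial>hist \<phi> \<pi> (c i)))"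
    using before by (intro sum.cong refl nn_integral_hist_nth) auto
  also have "\<dots> = (\<Sum>i\<in>{1..d}. emeasure (measure_pmf (hist \<phi> \<pi> (c i))) {h. first_closed i (last h)})"
    by (intro sum.cong refl) (rule emeasure_pmf_last[symmetric])
  finally show ?thesis .
qed

section \<open>The knock sequence alpha\<close>

lemma length_alpha_block: "length (alpha_block d n) = d * 2^n"
  by (simp add: alpha_block_def length_concat comp_def sum_list_triv)

lemma nth_alpha_block: "r < d * 2^n \<Longrightarrow> alpha_block d n ! r = r div 2^n + 1"
proof (induction d arbitrary: r)
  case (Suc d)
  have split: "alpha_block (Suc d) n = alpha_block d n @ replicate (2^n) (Suc d)"
    by (simp add: alpha_block_def)
  show ?case
  proof (cases "r < d * 2^n")
    case True
    then show ?thesis using Suc.IH split by (simp add: nth_append length_alpha_block)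
  next
    case False
    then have "r - d * 2^n < 2^n" "r div 2^n = d"
      using Suc.prems by (simp_all add: div_nat_eqI algebra_simps)
    then show ?thesis using split False by (simp add: nth_append length_alpha_block)
  qed
qed simp

lemma alpha_from_eq:
  "1 \<le> d \<Longrightarrow> n \<le> k \<Longrightarrow> r < d * 2^k \<Longrightarrow> alpha_from d n (d * (2^k - 2^n) + r) = r div 2^k + 1"
proof (induction "k - n" arbitrary: n)
  case 0
  then show ?case by (simp add: length_alpha_block nth_alpha_block)
next
  case (Suc m)
  then have nk: "n < k" by simp
  have "2^Suc n \<le> (2::nat)^k" using nk by (intro power_increasing) auto
  then have p: "(2::nat)^k - 2^n = 2^n + (2^k - 2^Suc n)" by simp
  have "d * (2^k - 2^n) = d * 2^n + d * (2^k - 2^Suc n)"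
    unfolding p by (rule distrib_left)
  then have "alpha_from d n (d * (2^k - 2^n) + r) = alpha_from d (Suc n) (d * (2^k - 2^Suc n) + r)"
    using Suc.prems by (simp add: length_alpha_block)
  also have "\<dots> = r div 2^k + 1" using Suc.hyps(1)[of "Suc n"] Suc.hyps(2) Suc.prems nk by simp
  finally show ?case .
qed

lemma alpha_from_range: "1 \<le> d \<Longrightarrow> alpha_from d n t \<in> {1..d}"
proof (induction d n t rule: alpha_from.induct)
  case (1 d n t)
  show ?case
  proof (cases "t < length (alpha_block d n)")
    case True
    then have "t div 2^n < d" using length_alpha_block[of d n] by (simp add: less_mult_imp_div_less)
    then show ?thesis using True 1 by (simp add: length_alpha_block nth_alpha_block)
  qed (use 1 in simp)
qed

lemma alpha_range: "1 \<le> d \<Longrightarrow> alpha d t \<in> {1..d}"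
  unfolding alpha_def by (rule alpha_from_range)

definition phase_start :: "nat \<Rightarrow> nat \<Rightarrow> nat" where
  "phase_start d k = d * (2^k - 1)"

lemma phase_start_0 [simp]: "phase_start d 0 = 0"
  by (simp add: phase_start_def)

lemma phase_start_Suc: "phase_start d (Suc k) = phase_start d k + d * 2^k"
proof -
  have "(2::nat)^Suc k - 1 = (2^k - 1) + 2^k" by simp
  then show ?thesis unfolding phase_start_def by (metis distrib_left)
qed

lemma strict_mono_phase_start: "1 \<le> d \<Longrightarrow> strict_mono (phase_start d)"
  unfolding strict_mono_Suc_iff using phase_start_Suc by simp

lemma card_phase: "card {phase_start d k..<phase_start d (Suc k)} = d * 2^k"
  using phase_start_Suc[of d k] by simp

lemma phase_start_Suc_le: "phase_start d (Suc k) \<le> d * 2^Suc k"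
  unfolding phase_start_def by (intro mult_le_mono2) simp

lemma alpha_in_phase:
  assumes "1 \<le> d" "phase_start d k \<le> s" "s < phase_start d (Suc k)"
  shows "alpha d s = (s - phase_start d k) div 2^k + 1"
proof -
  have "s - phase_start d k < d * 2^k" using assms phase_start_Suc[of d k] by simp
  then have "alpha d (d * (2^k - 1) + (s - phase_start d k)) = (s - phase_start d k) div 2^k + 1"
    unfolding alpha_def using alpha_from_eq[OF assms(1), of 0 k] by simp
  moreover have "d * (2^k - 1) + (s - phase_start d k) = s" using assms unfolding phase_start_def by simp
  ultimately show ?thesis by simp
qed

definition run_end :: "nat \<Rightarrow> nat \<Rightarrow> nat \<Rightarrow> nat" where
  "run_end d k i = phase_start d k + i * 2^k"

lemma run_end_le_phase_start: "i \<le> d \<Longrightarrow> run_end d k i \<le> phase_start d (Suc k)"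
  unfolding run_end_def phase_start_Suc by simp

lemma run_end_diff: "1 \<le> i \<Longrightarrow> run_end d k i - run_end d k (i - 1) = 2^k \<and> run_end d k (i - 1) < run_end d k i"
  by (cases i) (simp_all add: run_end_def)

lemma alpha_in_run:
  assumes "1 \<le> d" "i \<in> {1..d}" "run_end d k (i - 1) \<le> s" "s < run_end d k i"
  shows "alpha d s = i"
proof -
  have phase: "phase_start d k \<le> s" "s < phase_start d (Suc k)"
    using assms run_end_le_phase_start[of i d k] unfolding run_end_def by auto
  have "2^k * (i - 1) \<le> s - phase_start d k" "s - phase_start d k < 2^k * Suc (i - 1)"
    using assms(2-4) phase(1) unfolding run_end_def by (auto simp: algebra_simps)
  then have "(s - phase_start d k) div 2^k = i - 1" by (rule div_nat_eqI)
  then show ?thesis using alpha_in_phase[OF assms(1) phase] assms(2) by simp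
qed

lemma alpha_after_run:
  assumes "1 \<le> d" "run_end d k i \<le> s" "s < phase_start d (Suc k)"
  shows "i < alpha d s"
proof -
  have phase: "phase_start d k \<le> s" using assms unfolding run_end_def by simp
  have "i \<le> (s - phase_start d k) div 2^k"
    using assms by (subst less_eq_div_iff_mult_less_eq) (auto simp: run_end_def)
  then show ?thesis using alpha_in_phase[OF assms(1) phase assms(3)] by simp
qed

lemma suminf_ennreal_group:
  fixes f :: "nat \<Rightarrow> ennreal"
  assumes "strict_mono e" "e 0 = 0"
  shows "(\<Sum>t. f t) = (\<Sum>k. \<Sum>t\<in>{e k..<e (Suc k)}. f t)"
proof -
  have partial: "(\<Sum>k<K. \<Sum>t\<in>{e k..<e (Suc k)}. f t) = (\<Sum>t<e K. f t)" for K
  proof (induction K)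
    case (Suc K)
    have "e K \<le> e (Suc K)" using assms(1) by (simp add: strict_mono_less_eq)
    then have "(\<Sum>t<e (Suc K). f t) = (\<Sum>t\<in>{0..<e K}. f t) + (\<Sum>t\<in>{e K..<e (Suc K)}. f t)"
      by (simp add: atLeast0LessThan[symmetric] sum.atLeastLessThan_concat)
    then show ?case using Suc by (simp add: atLeast0LessThan)
  qed (simp add: assms(2))
  have "(\<lambda>n. \<Sum>t<n. f t) \<longlonglongrightarrow> (\<Sum>t. f t)" by (rule summable_LIMSEQ) simp
  from LIMSEQ_subseq_LIMSEQ[OF this assms(1)]
  have "(\<lambda>K. \<Sum>k<K. \<Sum>t\<in>{e k..<e (Suc k)}. f t) \<longlonglongrightarrow> (\<Sum>t. f t)"
    by (simp add: partial comp_def)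
  then show ?thesis by (simp add: sums_def sums_unique)
qed

section \<open>Lower and upper bounds\<close>

lemma of_nat_le_Tseq: "of_nat d \<le> Tseq d \<phi> \<pi>"
proof -
  have "of_nat d = (\<Sum>t<d. not_all_open \<phi> \<pi> d t)" by (simp add: not_all_open_early)
  also have "\<dots> \<le> (\<Sum>t. not_all_open \<phi> \<pi> d t)" by (rule sum_le_suminf) auto
  finally show ?thesis unfolding Tseq_eq_suminf_not_all_open .
qed

lemma sum_const_ennreal: "0 \<le> c \<Longrightarrow> (\<Sum>t\<in>A. ennreal c) = ennreal (real (card A) * c)"
  by (simp add: ennreal_mult ennreal_of_nat_eq_real_of_nat)

lemma one_minus_power_le_inverse:
  fixes x :: real
  assumes "0 \<le> x" "x \<le> 1"
  shows "(1 - x)^r \<le> 1 / (1 + real r * x)"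
proof -
  have "1 + real r * x \<le> (1 + x)^r" using Bernoulli_inequality[of x r] assms by simp
  moreover have "(1 - x)^r * (1 + x)^r \<le> 1"
  proof -
    have "(1 - x)^r * (1 + x)^r = (1 - x*x)^r" by (simp add: power_mult_distrib[symmetric] algebra_simps)
    also have "\<dots> \<le> 1" using assms by (intro power_le_one) (auto simp: mult_le_one)
    finally show ?thesis .
  qed
  moreover have "0 \<le> (1 - x)^r" "0 < 1 + real r * x" using assms by (simp_all add: add_pos_nonneg)
  ultimately have "(1 - x)^r * (1 + real r * x) \<le> 1"
    by (meson order_trans mult_left_mono)
  then show ?thesis using \<open>0 < 1 + real r * x\<close> by (simp add: field_simps)
qed

lemma min_le_one_minus_inverse:
  fixes y :: real
  assumes "0 \<le> y"
  shows "min 1 y / 2 \<le> 1 - 1 / (1 + y)"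
proof (cases "y \<le> 1")
  case True
  have "y * y \<le> y * 1" using mult_left_mono[OF True assms] .
  then show ?thesis using assms True by (simp add: field_simps)
qed (simp add: field_simps)

lemma card_exceeding_lt_half:
  fixes c :: "'a \<Rightarrow> nat"
  assumes "finite J" "J \<noteq> {}" "(\<Sum>j\<in>J. c j) \<le> t" "2 * t \<le> card J * n"
  shows "2 * card {j\<in>J. n < c j} < card J"
proof (rule ccontr)
  let ?B = "{j\<in>J. n < c j}"
  assume "\<not> 2 * card ?B < card J"
  have "card ?B * (n + 1) = (\<Sum>j\<in>?B. n + 1)" by simp
  also have "\<dots> \<le> (\<Sum>j\<in>?B. c j)" by (intro sum_mono) auto
  also have "\<dots> \<le> (\<Sum>j\<in>J. c j)" using assms(1) by (intro sum_mono2) auto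
  finally have "card ?B * (n + 1) \<le> t" using assms(3) by linarith
  moreover have "card J * (n + 1) \<le> 2 * card ?B * (n + 1)"
    using \<open>\<not> 2 * card ?B < card J\<close> by (intro mult_le_mono1) simp
  ultimately have "card J * (n + 1) \<le> card J * n" using assms(4) by linarith
  then show False using assms(1,2) by (simp add: card_gt_0_iff algebra_simps)
qed

text \<open>At least half of the doors have been knocked on at most \<open>n\<close> times, and each of them
  is still closed with probability at most \<open>1 - p n\<close>.\<close>

lemma one_minus_prod_ge_min:
  fixes p :: "nat \<Rightarrow> real" and c :: "'a \<Rightarrow> nat"
  assumes "finite J" "J \<noteq> {}" "(\<Sum>j\<in>J. c j) \<le> t" "2 * t \<le> card J * n"
    and antimono: "\<And>m n. m \<le> n \<Longrightarrow> p n \<le> p m" and bounds: "\<And>n. 0 \<le> p n \<and> p n \<le> 1"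
  shows "min 1 (real (card J) * p n) / 4 \<le> 1 - (\<Prod>j\<in>J. 1 - p (c j))"
proof -
  define S where "S = {j\<in>J. c j \<le> n}"
  have split: "J = S \<union> {j\<in>J. n < c j}" "S \<inter> {j\<in>J. n < c j} = {}" unfolding S_def by auto
  have fin: "finite S" "finite {j\<in>J. n < c j}" using assms(1) unfolding S_def by auto
  have "card J = card S + card {j\<in>J. n < c j}"
    using card_Un_disjoint[OF fin split(2)] split(1) by simp
  then have half: "real (card J) \<le> 2 * real (card S)"
    using card_exceeding_lt_half[OF assms(1-4)] by linarith
  have x: "0 \<le> p n" "p n \<le> 1" using bounds by auto
  have "(\<Prod>j\<in>J. 1 - p (c j)) = (\<Prod>j\<in>S. 1 - p (c j)) * (\<Prod>j\<in>{j\<in>J. n < c j}. 1 - p (c j))"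
    using prod.union_disjoint[OF fin split(2)] split(1) by simp
  also have "\<dots> \<le> (\<Prod>j\<in>S. 1 - p (c j))"
    using bounds by (intro mult_left_le prod_le_1 prod_nonneg) (auto simp: algebra_simps)
  also have "\<dots> \<le> (\<Prod>j\<in>S. 1 - p n)"
    using bounds antimono unfolding S_def by (intro prod_mono) (auto simp: algebra_simps)
  also have "\<dots> = (1 - p n)^card S" by simp
  also have "\<dots> \<le> 1 / (1 + real (card S) * p n)" by (rule one_minus_power_le_inverse[OF x])
  finally have prod: "(\<Prod>j\<in>J. 1 - p (c j)) \<le> 1 / (1 + real (card S) * p n)" .
  have "real (card J) * p n \<le> 2 * (real (card S) * p n)"
    using half x by (metis mult.assoc mult_right_mono)
  then have "min 1 (real (card J) * p n) / 4 \<le> min 1 (real (card S) * p n) / 2"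
    by (auto simp: min_def)
  also have "\<dots> \<le> 1 - 1 / (1 + real (card S) * p n)" using x by (intro min_le_one_minus_inverse) simp
  finally show ?thesis using prod by linarith
qed

context door_config
begin

lemma knocking_alpha: "1 \<le> d \<Longrightarrow> knocking d \<phi> (alpha d)"
  by (intro knocking.intro door_config_axioms knocking_axioms.intro alpha_range)

lemma not_all_open_ge_one_minus_prod:
  assumes "knocking d \<phi> \<pi>"
  shows "ennreal (1 - (\<Prod>j\<in>{1..d}. 1 - fund \<phi> j (knock_count \<pi> j t))) \<le> not_all_open \<phi> \<pi> d t"
proof -
  let ?M = "measure_pmf (hist \<phi> \<pi> t)" and ?P = "\<Prod>j\<in>{1..d}. 1 - fund \<phi> j (knock_count \<pi> j t)"
  have "0 \<le> ?P" using fund_bounds by (intro prod_nonneg) (auto simp: algebra_simps)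
  then have "measure ?M {h. {1..d} \<subseteq> last h} \<le> ?P"
    using knocking.all_open_prob_le[OF assms, of t] by (simp add: measure_pmf.emeasure_eq_measure)
  then have "1 - ?P \<le> measure ?M (space ?M - {h. {1..d} \<subseteq> last h})"
    by (subst measure_pmf.prob_compl) auto
  then show ?thesis
    unfolding not_all_open_def by (simp add: measure_pmf.emeasure_eq_measure set_diff_eq)
qed

lemma not_all_open_alpha_phase_end:
  assumes "1 \<le> d"
  shows "not_all_open \<phi> (alpha d) d (phase_start d (Suc k)) \<le> (\<Sum>i\<in>{1..d}. ennreal (fund \<phi> i (2^k)))"
proof -
  have "not_all_open \<phi> (alpha d) d (phase_start d (Suc k))
      \<le> (\<Sum>i\<in>{1..d}. emeasure (measure_pmf (hist \<phi> (alpha d) (run_end d k i))) {h. first_closed i (last h)})"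
    using run_end_le_phase_start alpha_after_run[OF assms]
    by (intro not_all_open_le_sum_first_closed) auto
  also have "\<dots> \<le> (\<Sum>i\<in>{1..d}. ennreal (fund \<phi> i (2^k)))"
  proof (intro sum_mono)
    fix i assume i: "i \<in> {1..d}"
    have "run_end d k (i - 1) < run_end d k i" "run_end d k i - run_end d k (i - 1) = 2^k"
      using run_end_diff[of i d k] i by auto
    then show "emeasure (measure_pmf (hist \<phi> (alpha d) (run_end d k i))) {h. first_closed i (last h)}
        \<le> ennreal (fund \<phi> i (2^k))"
      using knocking.first_closed_after_block_prob_le[OF knocking_alpha[OF assms] i,
          of "run_end d k (i - 1)" "run_end d k i"] alpha_in_run[OF assms i] by simp
  qed
  finally show ?thesis .
qed

end

locale identical_doors = door_config +
  assumes doors_nonempty: "1 \<le> d"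
    and same_fund: "\<And>i. i \<in> {1..d} \<Longrightarrow> fund \<phi> i = fund \<phi> 1"
begin

lemma fund_1_bounds: "0 \<le> fund \<phi> 1 n \<and> fund \<phi> 1 n \<le> 1"
  using fund_bounds doors_nonempty by simp

lemma not_all_open_ge_min:
  assumes "\<pi> \<in> knock_seqs d" "2 * t \<le> d * n"
  shows "ennreal (min 1 (real d * fund \<phi> 1 n) / 4) \<le> not_all_open \<phi> \<pi> d t"
proof -
  have knocking: "knocking d \<phi> \<pi>"
    using assms(1) by (intro knocking.intro door_config_axioms knocking_axioms.intro) (auto simp: knock_seqs_def)
  have "min 1 (real (card {1..d}) * fund \<phi> 1 n) / 4 \<le> 1 - (\<Prod>j\<in>{1..d}. 1 - fund \<phi> 1 (knock_count \<pi> j t))"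
  proof (rule one_minus_prod_ge_min)
    show "(\<Sum>j\<in>{1..d}. knock_count \<pi> j t) \<le> t"
      using sum_knock_count[of \<pi> d t] assms(1) by (simp add: knock_seqs_def)
    show "\<And>m n. m \<le> n \<Longrightarrow> fund \<phi> 1 n \<le> fund \<phi> 1 m" using fund_antimono doors_nonempty by simp
  qed (use assms(2) doors_nonempty fund_1_bounds in auto)
  then have "min 1 (real d * fund \<phi> 1 n) / 4 \<le> 1 - (\<Prod>j\<in>{1..d}. 1 - fund \<phi> 1 (knock_count \<pi> j t))"
    by simp
  also have "\<dots> = 1 - (\<Prod>j\<in>{1..d}. 1 - fund \<phi> j (knock_count \<pi> j t))"
    by (intro arg_cong[where f = "\<lambda>x. 1 - x"] prod.cong refl) (metis same_fund)
  finally have "ennreal (min 1 (real d * fund \<phi> 1 n) / 4)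
      \<le> ennreal (1 - (\<Prod>j\<in>{1..d}. 1 - fund \<phi> j (knock_count \<pi> j t)))"
    by (rule ennreal_leI)
  also have "\<dots> \<le> not_all_open \<phi> \<pi> d t" by (rule not_all_open_ge_one_minus_prod[OF knocking])
  finally show ?thesis .
qed

definition phase_mass :: "nat \<Rightarrow> real" where
  "phase_mass k = min 1 (real d * fund \<phi> 1 (2^(k+2)))"

definition phase_lower_bound :: ennreal where
  "phase_lower_bound = (\<Sum>k. ennreal (real (d * 2^k) * (phase_mass k / 4)))"

lemma phase_mass_nonneg: "0 \<le> phase_mass k"
  unfolding phase_mass_def using fund_1_bounds by simp

lemma Tseq_eq_suminf_phases:
  "Tseq d \<phi> \<pi> = (\<Sum>k. \<Sum>t\<in>{phase_start d k..<phase_start d (Suc k)}. not_all_open \<phi> \<pi> d t)"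
  unfolding Tseq_eq_suminf_not_all_open
  by (rule suminf_ennreal_group[OF strict_mono_phase_start[OF doors_nonempty] phase_start_0])

lemma phase_lower_bound_le_Tseq:
  assumes "\<pi> \<in> knock_seqs d"
  shows "phase_lower_bound \<le> Tseq d \<phi> \<pi>"
  unfolding Tseq_eq_suminf_phases phase_lower_bound_def
proof (rule suminf_le)
  fix k
  have m: "0 \<le> phase_mass k / 4" using phase_mass_nonneg[of k] by simp
  have "ennreal (real (d * 2^k) * (phase_mass k / 4))
      = (\<Sum>t\<in>{phase_start d k..<phase_start d (Suc k)}. ennreal (phase_mass k / 4))"
    unfolding sum_const_ennreal[OF m] card_phase ..
  also have "\<dots> \<le> (\<Sum>t\<in>{phase_start d k..<phase_start d (Suc k)}. not_all_open \<phi> \<pi> d t)"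
  proof (rule sum_mono)
    fix t assume "t \<in> {phase_start d k..<phase_start d (Suc k)}"
    then have "2 * t \<le> d * 2^(k+2)" using phase_start_Suc_le[of d k] by simp
    then show "ennreal (phase_mass k / 4) \<le> not_all_open \<phi> \<pi> d t"
      unfolding phase_mass_def by (rule not_all_open_ge_min[OF assms])
  qed
  finally show "ennreal (real (d * 2^k) * (phase_mass k / 4))
      \<le> (\<Sum>t\<in>{phase_start d k..<phase_start d (Suc k)}. not_all_open \<phi> \<pi> d t)" .
qed auto

lemma not_all_open_alpha_le_phase_mass:
  assumes "t \<ge> phase_start d (k + 3)"
  shows "not_all_open \<phi> (alpha d) d t \<le> ennreal (phase_mass k)"
proof -
  have "Suc (k + 2) = k + 3" by simp
  then have "not_all_open \<phi> (alpha d) d t \<le> not_all_open \<phi> (alpha d) d (phase_start d (Suc (k + 2)))"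
    using not_all_open_antimono assms by metis
  also have "\<dots> \<le> (\<Sum>i\<in>{1..d}. ennreal (fund \<phi> i (2^(k+2))))"
    by (rule not_all_open_alpha_phase_end[OF doors_nonempty])
  also have "\<dots> = (\<Sum>i\<in>{1..d}. ennreal (fund \<phi> 1 (2^(k+2))))"
    by (intro sum.cong refl) (metis same_fund)
  also have "\<dots> = ennreal (real d * fund \<phi> 1 (2^(k+2)))"
    using fund_1_bounds by (simp add: ennreal_mult ennreal_of_nat_eq_real_of_nat)
  finally have "not_all_open \<phi> (alpha d) d t \<le> ennreal (real d * fund \<phi> 1 (2^(k+2)))" .
  then show ?thesis
    using not_all_open_le_1[of \<phi> "alpha d" d t] unfolding phase_mass_def min_def by auto
qed

text \<open>Phase \<open>k + 3\<close> is eight times as long as phase \<open>k\<close>; hence the factor \<open>32 = 8 \<cdot> 4\<close>.\<close>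

lemma phase_alpha_le:
  "(\<Sum>t\<in>{phase_start d (k + 3)..<phase_start d (Suc (k + 3))}. not_all_open \<phi> (alpha d) d t)
     \<le> 32 * ennreal (real (d * 2^k) * (phase_mass k / 4))"
proof -
  have "(\<Sum>t\<in>{phase_start d (k + 3)..<phase_start d (Suc (k + 3))}. not_all_open \<phi> (alpha d) d t)
      \<le> (\<Sum>t\<in>{phase_start d (k + 3)..<phase_start d (Suc (k + 3))}. ennreal (phase_mass k))"
    by (intro sum_mono not_all_open_alpha_le_phase_mass) simp
  also have "\<dots> = ennreal (real (d * 2^(k + 3)) * phase_mass k)"
    unfolding sum_const_ennreal[OF phase_mass_nonneg] card_phase ..
  also have "\<dots> = ennreal (32 * (real (d * 2^k) * (phase_mass k / 4)))"
    by (simp add: power_add mult_ac)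
  also have "\<dots> = ennreal 32 * ennreal (real (d * 2^k) * (phase_mass k / 4))"
    using phase_mass_nonneg[of k] by (intro ennreal_mult) auto
  also have "\<dots> = 32 * ennreal (real (d * 2^k) * (phase_mass k / 4))"
    by (simp only: ennreal_numeral)
  finally show ?thesis .
qed

lemma Tseq_alpha_le: "Tseq d \<phi> (alpha d) \<le> 32 * phase_lower_bound + of_nat (7 * d)"
proof -
  define B where "B k = (\<Sum>t\<in>{phase_start d k..<phase_start d (Suc k)}. not_all_open \<phi> (alpha d) d t)" for k
  have "B k \<le> of_nat (d * 2^k)" for k
  proof -
    have "B k \<le> (\<Sum>t\<in>{phase_start d k..<phase_start d (Suc k)}. 1)"
      unfolding B_def by (intro sum_mono not_all_open_le_1)
    then show ?thesis by (simp add: phase_start_Suc)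
  qed
  then have "(\<Sum>k<3. B k) \<le> (\<Sum>k<3. of_nat (d * 2^k))" by (intro sum_mono)
  also have "\<dots> = of_nat (\<Sum>k<3. d * 2^k)" by (rule of_nat_sum[symmetric])
  also have "(\<Sum>k<3. d * 2^k) = 7 * d" by (simp add: numeral_3_eq_3)
  finally have head: "(\<Sum>k<3. B k) \<le> of_nat (7 * d)" .
  have "(\<Sum>k. B (k + 3)) \<le> (\<Sum>k. 32 * ennreal (real (d * 2^k) * (phase_mass k / 4)))"
    unfolding B_def by (intro suminf_le phase_alpha_le) auto
  then have tail: "(\<Sum>k. B (k + 3)) \<le> 32 * phase_lower_bound"
    unfolding phase_lower_bound_def by simp
  have "Tseq d \<phi> (alpha d) = (\<Sum>k. B (k + 3)) + (\<Sum>k<3. B k)"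
    unfolding Tseq_eq_suminf_phases B_def[symmetric] by (rule suminf_offset) simp
  then show ?thesis using add_mono[OF tail head] by (simp only:)
qed

lemma Topt_bounds:
  "Topt d \<phi> \<le> Tseq d \<phi> (alpha d) \<and> Tseq d \<phi> (alpha d) \<le> ennreal 39 * Topt d \<phi>"
proof
  have "alpha d \<in> knock_seqs d" using alpha_range[OF doors_nonempty] by (simp add: knock_seqs_def)
  then show "Topt d \<phi> \<le> Tseq d \<phi> (alpha d)" unfolding Topt_def by (rule INF_lower)
  have lower: "phase_lower_bound \<le> Topt d \<phi>"
    unfolding Topt_def by (rule INF_greatest) (rule phase_lower_bound_le_Tseq)
  have "of_nat d \<le> Topt d \<phi>"
    unfolding Topt_def by (rule INF_greatest) (rule of_nat_le_Tseq)
  then have "of_nat (7 * d) \<le> 7 * Topt d \<phi>"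
    using mult_left_mono[of "of_nat d" "Topt d \<phi>" 7] by simp
  moreover have "32 * phase_lower_bound \<le> 32 * Topt d \<phi>" using lower by (rule mult_left_mono) simp
  ultimately have "32 * phase_lower_bound + of_nat (7 * d) \<le> 32 * Topt d \<phi> + 7 * Topt d \<phi>"
    by (intro add_mono)
  with Tseq_alpha_le have "Tseq d \<phi> (alpha d) \<le> 32 * Topt d \<phi> + 7 * Topt d \<phi>"
    by (rule order_trans)
  also have "\<dots> = ennreal 39 * Topt d \<phi>" by (simp flip: distrib_right)
  finally show "Tseq d \<phi> (alpha d) \<le> ennreal 39 * Topt d \<phi>" .
qed

end

theorem mainTheorem5:
  "\<exists>c::real. c > 0 \<and>
     (\<forall>(d::nat) \<phi>.
        d \<ge> 2 \<longrightarrow> configuration d \<phi> \<longrightarrow>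
        (\<forall>i\<in>{1..d}. summable (fund \<phi> i)) \<longrightarrow>
        (\<forall>i\<in>{1..d}. \<forall>j\<in>{1..d}. fund \<phi> i = fund \<phi> j) \<longrightarrow>
        Topt d \<phi> \<le> Tseq d \<phi> (alpha d) \<and> Tseq d \<phi> (alpha d) \<le> ennreal c * Topt d \<phi>)"
proof (intro exI[of _ 39] conjI allI impI)
  fix d :: nat and \<phi> :: "nat \<Rightarrow> nat set list \<Rightarrow> real"
  assume d: "d \<ge> 2" and config: "configuration d \<phi>"
    and same: "\<forall>i\<in>{1..d}. \<forall>j\<in>{1..d}. fund \<phi> i = fund \<phi> j"
  have "1 \<in> {1..d}" using d by simp
  then have same_1: "fund \<phi> i = fund \<phi> 1" if "i \<in> {1..d}" for i
    using same that by blast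
  have "identical_doors d \<phi>"
  proof (intro identical_doors.intro identical_doors_axioms.intro)
    show "door_config d \<phi>" by (rule door_config.intro) (fact config)
    show "1 \<le> d" using d by simp
  qed (rule same_1)
  then interpret identical_doors d \<phi> .
  show "Topt d \<phi> \<le> Tseq d \<phi> (alpha d)" "Tseq d \<phi> (alpha d) \<le> ennreal 39 * Topt d \<phi>"
    using Topt_bounds by simp_all
qed simp
end
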